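(* With the notation below, let $D=D_+-D_-\in\mathrm{Div}(C_p)$ with $D_\pm$ effective, and let $(h_i,\mu_i)$, $(h'_j,\mu'_j)$ be finite families in $H_p^+\times\mathbb{R}_+^*$ with $D_+=\sum_i\delta(h_i,\mu_i)$ and $D_-=\sum_j\delta(h'_j,\mu'_j)$. Assume $\deg(D)=0$ and that $h\in H_p$ satisfies $(p-1)h=\sum_ih_i-\sum_jh'_j$. Then the function $f(\lambda)=\sum_i\Theta_{h_i,\mu_i}(\lambda)-\sum_j\Theta_{h'_j,\mu'_j}(\lambda)-h\lambda$ is continuous, piecewise affine with slopes in $H_p$, satisfies $f(p\lambda)=f(\lambda)$ for all $\lambda\in\mathbb{R}_+^*$, and its principal divisor is $(f)=D$.
   Context: Let $p$ be a prime, $H_p=\mathbb{Z}[1/p]$, $H_p^+=H_p\cap(0,\infty)$. $C_p$ is the set of subgroups $H=\lambda H_p\subset\mathbb{R}$, $\lambda>0$. A divisor $D$ on $C_p$ assigns $D(H)\in H$ to each $H\in C_p$, zero for all but finitely many $H$; divisors form the group $\mathrm{Div}(C_p)$; $D$ is effective if $D(H)\geq0$ for all $H$; $\deg(D)=\sum_HD(H)$. For $h\in H_p^+$, $\mu>0$, $\delta(h,\mu)$ is the divisor supported at $\mu h^{-1}H_p$ with value $\mu$ there. For a continuous piecewise affine $f$ on $(0,\infty)$ with slopes in $H_p$ and $f(p\lambda)=f(\lambda)$, the order at $H=\lambda H_p$ is $\mathrm{Ord}_H(f)=h_+-h_-$, $h_\pm=\lim_{\epsilon\to0\pm}(f((1+\epsilon)\lambda)-f(\lambda))/\epsilon$,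 and $(f)(H)=\mathrm{Ord}_H(f)$. Let $\theta(\lambda)=\sum_{m\geq0}\max(0,1-p^m\lambda)+\sum_{m\geq1}\max(0,p^{-m}\lambda-1)$ and $\Theta_{h,\mu}(\lambda)=\mu\,\theta(\mu^{-1}h\lambda)$. *)

theory Defs
  imports "HOL-Analysis.Analysis"
begin

definition Hp :: "nat \<Rightarrow> real set" where
  "Hp p = {x. \<exists>(k::int) (n::nat). x = real_of_int k / real p ^ n}"

definition Hp_pos :: "nat \<Rightarrow> real set" where
  "Hp_pos p = Hp p \<inter> {0<..}"

definition scaledHp :: "nat \<Rightarrow> real \<Rightarrow> real set" where
  "scaledHp p c = (\<lambda>x. c * x) ` Hp p"

definition Cp :: "nat \<Rightarrow> real set set" where
  "Cp p = {scaledHp p c | c. c > 0}"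

text \<open>Divisors on C_p are modelled as functions real set => real, zero outside C_p.\<close>
definition is_divisor :: "nat \<Rightarrow> (real set \<Rightarrow> real) \<Rightarrow> bool" where
  "is_divisor p D \<longleftrightarrow> (\<forall>H. D H \<noteq> 0 \<longrightarrow> H \<in> Cp p) \<and> (\<forall>H \<in> Cp p. D H \<in> H)
     \<and> finite {H. D H \<noteq> 0}"

definition effective :: "(real set \<Rightarrow> real) \<Rightarrow> bool" where
  "effective D \<longleftrightarrow> (\<forall>H. D H \<ge> 0)"

definition deg :: "(real set \<Rightarrow> real) \<Rightarrow> real" where
  "deg D = sum D {H. D H \<noteq> 0}"

definition delta_div :: "nat \<Rightarrow> real \<Rightarrow> real \<Rightarrow> real set \<Rightarrow> real" where
  "delta_div p h \<mu> H = (if H = scaledHp p (\<mu> / h) then \<mu> else 0)"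

definition piecewise_affine_Hp :: "nat \<Rightarrow> (real \<Rightarrow> real) \<Rightarrow> bool" where
  "piecewise_affine_Hp p f \<longleftrightarrow> continuous_on {0<..} f \<and>
     (\<forall>a b. 0 < a \<longrightarrow> a < b \<longrightarrow>
       (\<exists>xs::real list. xs \<noteq> [] \<and> sorted xs \<and> hd xs = a \<and> last xs = b \<and>
          (\<forall>k. Suc k < length xs \<longrightarrow>
             (\<exists>s \<in> Hp p. \<exists>c. \<forall>x \<in> {xs ! k .. xs ! Suc k}. f x = s * x + c))))"

text \<open>Ord at the point lambda: h_+ - h_-.\<close>
definition ord_at :: "(real \<Rightarrow> real) \<Rightarrow> real \<Rightarrow> real" where
  "ord_at f l =
     Lim (at_right 0) (\<lambda>e. (f ((1 + e) * l) - f l) / e)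
   - Lim (at_left 0) (\<lambda>e. (f ((1 + e) * l) - f l) / e)"

definition principal_div :: "nat \<Rightarrow> (real \<Rightarrow> real) \<Rightarrow> real set \<Rightarrow> real" where
  "principal_div p f H =
     (if H \<in> Cp p then ord_at f (SOME l. l > 0 \<and> H = scaledHp p l) else 0)"

definition theta :: "nat \<Rightarrow> real \<Rightarrow> real" where
  "theta p l = (\<Sum>m. max 0 (1 - real p ^ m * l))
             + (\<Sum>m. max 0 (l / real p ^ Suc m - 1))"

definition Theta :: "nat \<Rightarrow> real \<Rightarrow> real \<Rightarrow> real \<Rightarrow> real" where
  "Theta p h \<mu> l = \<mu> * theta p (h * l / \<mu>)"

end

theory Submission
  imports Defs "HOL-Computational_Algebra.Primes"
begin

text \<open>On every compact window in \<open>(0,\<infinity>)\<close>, \<open>\<Theta>\<^sub>h\<^sub>,\<^sub>\<mu>\<close> is a finite sum of hinges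
  \<open>max 0 (\<alpha> \<lambda> + \<beta>)\<close> with slopes \<open>\<alpha> \<in> \<plusminus>h p\<^sup>\<int> \<subseteq> H\<^sub>p\<close>, kinked exactly at the points
  \<open>\<mu> h\<^sup>-\<^sup>1 p\<^sup>k\<close>, where the slope jumps by \<open>\<mu> / \<lambda>\<close>. Hence \<open>f\<close> is continuous and piecewise affine with
  slopes in \<open>H\<^sub>p\<close>, and \<open>Ord\<^sub>H(f)\<close> at \<open>H = \<lambda>H\<^sub>p\<close>, which is \<open>\<lambda>\<close> times the jump of the slope at \<open>\<lambda>\<close>, collects
  \<open>\<mu>\<^sub>i\<close> for every \<open>i\<close> with \<open>\<lambda> \<in> \<mu>\<^sub>i h\<^sub>i\<^sup>-\<^sup>1 p\<^sup>\<int>\<close> and \<open>-\<mu>'\<^sub>j\<close> for every such \<open>j\<close>: this is \<open>D(\<lambda>H\<^sub>p)\<close>. Finally the functional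
  equation \<open>\<theta>(p\<lambda>) = \<theta>(\<lambda>) + \<lambda> - 1\<close> gives
  \<open>f(p\<lambda>) = f(\<lambda>) + \<lambda> (\<Sum>h\<^sub>i - \<Sum>h'\<^sub>j - (p - 1) h) - deg D = f(\<lambda>)\<close>.\<close>

lemma Hp_of_int: "real_of_int k \<in> Hp p"
  unfolding Hp_def by (rule CollectI, rule exI[of _ k], rule exI[of _ 0]) simp

lemma Hp_0: "0 \<in> Hp p" and Hp_1: "1 \<in> Hp p"
  using Hp_of_int[of 0 p] Hp_of_int[of 1 p] by simp_all

lemma Hp_power: "real p ^ n \<in> Hp p"
  using Hp_of_int[of "int p ^ n" p] by simp

lemma Hp_divide_power:
  assumes "x \<in> Hp p" shows "x / real p ^ n \<in> Hp p"
proof -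
  obtain k m where "x = real_of_int k / real p ^ m" using assms unfolding Hp_def by auto
  then have "x / real p ^ n = real_of_int k / real p ^ (m + n)" by (simp add: power_add)
  then show ?thesis unfolding Hp_def by blast
qed

lemma Hp_uminus:
  assumes "x \<in> Hp p" shows "- x \<in> Hp p"
proof -
  obtain k n where "x = real_of_int k / real p ^ n" using assms unfolding Hp_def by auto
  then have "- x = real_of_int (- k) / real p ^ n" by simp
  then show ?thesis unfolding Hp_def by blast
qed

lemma Hp_add:
  assumes "p > 0" "x \<in> Hp p" "y \<in> Hp p" shows "x + y \<in> Hp p"
proof -
  obtain a n where x: "x = real_of_int a / real p ^ n" using assms(2) unfolding Hp_def by auto
  obtain b m where y: "y = real_of_int b / real p ^ m" using assms(3) unfolding Hp_def by auto
  have "x + y = real_of_int (a * int p ^ m + b * int p ^ n) / real p ^ (n + m)"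
    using assms(1) by (simp add: x y field_simps power_add)
  then show ?thesis unfolding Hp_def by blast
qed

lemma Hp_diff: "p > 0 \<Longrightarrow> x \<in> Hp p \<Longrightarrow> y \<in> Hp p \<Longrightarrow> x - y \<in> Hp p"
  using Hp_add[of p x "- y"] Hp_uminus[of y p] by simp

lemma Hp_mult:
  assumes "p > 0" "x \<in> Hp p" "y \<in> Hp p" shows "x * y \<in> Hp p"
proof -
  obtain a n where x: "x = real_of_int a / real p ^ n" using assms(2) unfolding Hp_def by auto
  obtain b m where y: "y = real_of_int b / real p ^ m" using assms(3) unfolding Hp_def by auto
  have "x * y = real_of_int (a * b) / real p ^ (n + m)"
    using assms(1) by (simp add: x y field_simps power_add)
  then show ?thesis unfolding Hp_def by blast
qed

lemma Hp_power_int: "real p powi k \<in> Hp p"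
proof (cases "k \<ge> 0")
  case True
  then show ?thesis using Hp_power[of p "nat k"] by (simp add: power_int_def)
next
  case False
  then show ?thesis using Hp_divide_power[OF Hp_1, of p "nat (- k)"] by (simp add: power_int_def field_simps)
qed

lemma scaledHp_mult_power_int:
  assumes "p > 0"
  shows "scaledHp p (c * real p powi k) = scaledHp p c"
proof -
  let ?u = "real p powi k"
  have "(\<lambda>x. ?u * x) ` Hp p = Hp p"
  proof
    show "(\<lambda>x. ?u * x) ` Hp p \<subseteq> Hp p" using Hp_mult[OF assms] Hp_power_int by auto
    show "Hp p \<subseteq> (\<lambda>x. ?u * x) ` Hp p"
    proof
      fix x assume "x \<in> Hp p"
      then have "real p powi (- k) * x \<in> Hp p" using Hp_mult[OF assms Hp_power_int] by blast
      moreover have "x = ?u * (real p powi (- k) * x)" using assms by (simp add: power_int_minus)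
      ultimately show "x \<in> (\<lambda>x. ?u * x) ` Hp p" by blast
    qed
  qed
  moreover have "scaledHp p (c * ?u) = (\<lambda>x. c * x) ` ((\<lambda>x. ?u * x) ` Hp p)"
    unfolding scaledHp_def image_image by (simp add: mult.assoc)
  ultimately show ?thesis unfolding scaledHp_def by simp
qed

text \<open>Primality of \<open>p\<close> is what makes the positive units of \<open>H\<^sub>p\<close> exactly the powers of \<open>p\<close>.\<close>
lemma scaledHp_eq_iff:
  assumes p: "prime p" and c: "c > 0" and l: "l > 0"
  shows "scaledHp p l = scaledHp p c \<longleftrightarrow> (\<exists>k::int. l = c * real p powi k)"
proof
  assume "\<exists>k::int. l = c * real p powi k"
  then show "scaledHp p l = scaledHp p c" using scaledHp_mult_power_int prime_gt_0_nat[OF p] by auto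
next
  assume eq: "scaledHp p l = scaledHp p c"
  have p0: "p > 0" using prime_gt_0_nat[OF p] .
  have "l \<in> scaledHp p c" "c \<in> scaledHp p l"
    using eq Hp_1 unfolding scaledHp_def by (metis image_eqI mult_1_right)+
  then obtain u v where u: "u \<in> Hp p" "l = c * u" and v: "v \<in> Hp p" "c = l * v"
    unfolding scaledHp_def by blast
  have uv: "u * v = 1" using u(2) v(2) c by (metis mult.assoc mult_cancel_left1 less_irrefl)
  have upos: "u > 0" using u(2) c l by (metis zero_less_mult_pos)
  have vpos: "v > 0" using uv upos by (metis zero_less_mult_pos zero_less_one)
  obtain a n where a: "u = real_of_int a / real p ^ n" using u(1) unfolding Hp_def by auto
  obtain b m where b: "v = real_of_int b / real p ^ m" using v(1) unfolding Hp_def by auto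
  have apos: "a > 0" using upos p0 by (simp add: a zero_less_divide_iff)
  have bpos: "b > 0" using vpos p0 by (simp add: b zero_less_divide_iff)
  have "real_of_int (a * b) = real_of_int (int (p ^ (n + m)))"
    using uv p0 by (simp add: a b field_simps power_add)
  then have "a * b = int (p ^ (n + m))" by linarith
  then have "nat a * nat b = p ^ (n + m)" using apos bpos by (metis nat_int nat_mult_distrib less_imp_le)
  then obtain i where i: "nat a = p ^ i" using divides_primepow_nat[OF p] by (metis dvd_triv_left)
  have "real_of_int a = real p ^ i" using i apos by (metis of_int_of_nat_eq of_nat_power int_nat_eq less_imp_le)
  then have "u = real p powi (int i - int n)" using a p0 by (simp add: power_int_diff)
  then show "\<exists>k::int. l = c * real p powi k" using u(2) by blast
qed

lemma theta_eq_finite_sum: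
  assumes p: "real p > 1" and N1: "1 \<le> real p ^ N * x" and N2: "x \<le> real p ^ N"
  shows "theta p x = (\<Sum>m<N. max 0 (1 - real p ^ m * x) + max 0 (x / real p ^ Suc m - 1))"
proof -
  have x0: "x > 0" using N1 p by (smt (verit) mult_nonneg_nonpos zero_le_power)
  have s1: "(\<Sum>m. max 0 (1 - real p ^ m * x)) = (\<Sum>m<N. max 0 (1 - real p ^ m * x))"
  proof (rule suminf_finite)
    fix m assume "m \<notin> {..<N}"
    then have "real p ^ N \<le> real p ^ m" using p by (intro power_increasing) auto
    then show "max 0 (1 - real p ^ m * x) = 0" using N1 x0 by (smt (verit) mult_right_mono)
  qed simp
  have s2: "(\<Sum>m. max 0 (x / real p ^ Suc m - 1)) = (\<Sum>m<N. max 0 (x / real p ^ Suc m - 1))"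
  proof (rule suminf_finite)
    fix m assume "m \<notin> {..<N}"
    then have "real p ^ N \<le> real p ^ Suc m" using p by (intro power_increasing) auto
    then show "max 0 (x / real p ^ Suc m - 1) = 0" using N2 p by (simp add: divide_le_eq)
  qed simp
  show ?thesis unfolding theta_def s1 s2 sum.distrib ..
qed

lemma Theta_eq_hinge_sum:
  assumes p: "real p > 1" and mu: "\<mu> > 0"
    and N1: "\<mu> \<le> real p ^ N * h * x" and N2: "h * x \<le> \<mu> * real p ^ N"
  shows "Theta p h \<mu> x = (\<Sum>m<N. max 0 (- (real p ^ m * h) * x + \<mu>)
                                + max 0 (h / real p ^ Suc m * x + - \<mu>))"
proof -
  have "1 \<le> real p ^ N * (h * x / \<mu>)" "h * x / \<mu> \<le> real p ^ N"
    using N1 N2 mu by (simp_all add: field_simps)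
  then have "Theta p h \<mu> x = \<mu> * (\<Sum>m<N. max 0 (1 - real p ^ m * (h * x / \<mu>))
                                   + max 0 (h * x / \<mu> / real p ^ Suc m - 1))"
    unfolding Theta_def using theta_eq_finite_sum[OF p] by (simp add: ac_simps)
  also have "\<dots> = (\<Sum>m<N. \<mu> * max 0 (1 - real p ^ m * (h * x / \<mu>))
                          + \<mu> * max 0 (h * x / \<mu> / real p ^ Suc m - 1))"
    by (simp add: sum_distrib_left distrib_left)
  also have "\<dots> = (\<Sum>m<N. max 0 (- (real p ^ m * h) * x + \<mu>)
                          + max 0 (h / real p ^ Suc m * x + - \<mu>))"
  proof (rule sum.cong[OF refl])
    fix m
    have scale: "\<mu> * max 0 t = max 0 (\<mu> * t)" for t using mu by (auto simp: max_def zero_le_mult_iff)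
    have "\<mu> * (1 - real p ^ m * (h * x / \<mu>)) = - (real p ^ m * h) * x + \<mu>"
      "\<mu> * (h * x / \<mu> / real p ^ Suc m - 1) = h / real p ^ Suc m * x + - \<mu>"
      using mu by (simp_all add: field_simps)
    then show "\<mu> * max 0 (1 - real p ^ m * (h * x / \<mu>)) + \<mu> * max 0 (h * x / \<mu> / real p ^ Suc m - 1)
        = max 0 (- (real p ^ m * h) * x + \<mu>) + max 0 (h / real p ^ Suc m * x + - \<mu>)"
      by (simp only: scale)
  qed
  finally show ?thesis .
qed

lemma Theta_window:
  assumes p: "real p > 1" and h: "h > 0" and mu: "\<mu> > 0" and a: "a > 0"
  obtains N where "\<And>x. a \<le> x \<Longrightarrow> x \<le> b \<Longrightarrow> \<mu> < real p ^ N * h * x \<and> h * x < \<mu> * real p ^ N"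
proof -
  obtain N where N: "\<mu> / (h * a) + h * \<bar>b\<bar> / \<mu> < real p ^ N" using real_arch_pow[OF p] by blast
  have "\<mu> / (h * a) \<ge> 0" "h * \<bar>b\<bar> / \<mu> \<ge> 0" using h mu a by simp_all
  then have "\<mu> / (h * a) < real p ^ N" "h * \<bar>b\<bar> / \<mu> < real p ^ N" using N by linarith+
  then have N1: "\<mu> < real p ^ N * (h * a)" and N2: "h * \<bar>b\<bar> < \<mu> * real p ^ N"
    using h mu a by (simp_all add: pos_divide_less_eq mult.commute)
  show ?thesis
  proof (rule that)
    fix x assume x: "a \<le> x" "x \<le> b"
    have "real p ^ N * (h * a) \<le> real p ^ N * h * x" using x h p by (simp add: mult_left_mono)
    moreover have "h * x \<le> h * \<bar>b\<bar>" using x h by (simp add: mult_left_mono)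
    ultimately show "\<mu> < real p ^ N * h * x \<and> h * x < \<mu> * real p ^ N" using N1 N2 by linarith
  qed
qed

lemma theta_mult_p:
  assumes p: "real p > 1" and x: "x > 0"
  shows "theta p (real p * x) = theta p x + x - 1"
proof -
  obtain N where N: "max (1 / x) (real p * x) < real p ^ N" using real_arch_pow[OF p] by blast
  then have N1: "1 < real p ^ N * x" and N2: "real p * x < real p ^ N"
    using x by (simp_all add: field_simps)
  have px: "x \<le> real p * x" using p x by simp
  define a where "a m = max 0 (1 - real p ^ m * x)" for m
  define b where "b m = max 0 (x / real p ^ m - 1)" for m
  have "theta p (real p * x) = (\<Sum>m<N. a (Suc m) + b m)"
  proof -
    have "theta p (real p * x) = (\<Sum>m<N. max 0 (1 - real p ^ m * (real p * x))
                                      + max 0 (real p * x / real p ^ Suc m - 1))"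
    proof (rule theta_eq_finite_sum[OF p])
      have "real p ^ N * x \<le> real p ^ N * (real p * x)" using p x by simp
      then show "1 \<le> real p ^ N * (real p * x)" using N1 by linarith
    qed (use N2 in simp)
    then show ?thesis unfolding a_def b_def using p by (simp add: ac_simps)
  qed
  moreover have "theta p x = (\<Sum>m<N. a m + b (Suc m))"
    unfolding a_def b_def using N1 N2 px by (intro theta_eq_finite_sum[OF p]) simp_all
  moreover have "a N = 0" using N1 by (simp add: a_def)
  moreover have "b N = 0" using N2 px p by (simp add: b_def divide_le_eq)
  moreover have "b 0 - a 0 = x - 1" by (simp add: a_def b_def max_def)
  ultimately show ?thesis
    using sum_lessThan_telescope[of a N] sum_lessThan_telescope[of b N]
    by (simp add: sum.distrib sum_subtractf algebra_simps)
qed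

lemma Theta_mult_p:
  assumes p: "real p > 1" and "h > 0" "\<mu> > 0" "l > 0"
  shows "Theta p h \<mu> (real p * l) = Theta p h \<mu> l + h * l - \<mu>"
  using theta_mult_p[OF p, of "h * l / \<mu>"] assms by (simp add: Theta_def ac_simps field_simps)

definition kink_at :: "(real \<Rightarrow> real) \<Rightarrow> real \<Rightarrow> real \<Rightarrow> bool" where
  "kink_at F x0 k \<longleftrightarrow> (\<exists>s. \<forall>\<^sub>F y in nhds x0. F y = F x0 + s * (y - x0) + k * max 0 (x0 - y))"

lemma kink_at_cong:
  assumes "\<forall>\<^sub>F y in nhds x0. F y = G y" and "kink_at G x0 k"
  shows "kink_at F x0 k"
proof -
  obtain s where s: "\<forall>\<^sub>F y in nhds x0. G y = G x0 + s * (y - x0) + k * max 0 (x0 - y)"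
    using assms(2) unfolding kink_at_def by blast
  have x0: "F x0 = G x0" using eventually_nhds_x_imp_x[OF assms(1)] .
  have "\<forall>\<^sub>F y in nhds x0. F y = F x0 + s * (y - x0) + k * max 0 (x0 - y)"
    using assms(1) s by eventually_elim (simp add: x0)
  then show ?thesis unfolding kink_at_def by blast
qed

lemma kink_at_add:
  assumes "kink_at F x0 k" and "kink_at G x0 k'"
  shows "kink_at (\<lambda>y. F y + G y) x0 (k + k')"
proof -
  obtain s where s: "\<forall>\<^sub>F y in nhds x0. F y = F x0 + s * (y - x0) + k * max 0 (x0 - y)"
    using assms(1) unfolding kink_at_def by blast
  obtain s' where s': "\<forall>\<^sub>F y in nhds x0. G y = G x0 + s' * (y - x0) + k' * max 0 (x0 - y)"
    using assms(2) unfolding kink_at_def by blast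
  have "\<forall>\<^sub>F y in nhds x0. F y + G y = F x0 + G x0 + (s + s') * (y - x0) + (k + k') * max 0 (x0 - y)"
    using s s' by eventually_elim (simp add: algebra_simps)
  then show ?thesis unfolding kink_at_def by blast
qed

lemma kink_at_cmult:
  assumes "kink_at F x0 k"
  shows "kink_at (\<lambda>y. c * F y) x0 (c * k)"
proof -
  obtain s where s: "\<forall>\<^sub>F y in nhds x0. F y = F x0 + s * (y - x0) + k * max 0 (x0 - y)"
    using assms unfolding kink_at_def by blast
  have "\<forall>\<^sub>F y in nhds x0. c * F y = c * F x0 + (c * s) * (y - x0) + (c * k) * max 0 (x0 - y)"
    using s by eventually_elim (simp only: distrib_left mult.assoc)
  then show ?thesis unfolding kink_at_def by blast
qed

lemma kink_at_diff:
  "kink_at F x0 k \<Longrightarrow> kink_at G x0 k' \<Longrightarrow> kink_at (\<lambda>y. F y - G y) x0 (k - k')"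
  using kink_at_add[of F x0 k "\<lambda>y. - 1 * G y" "- 1 * k'"] kink_at_cmult[of G x0 k' "- 1"] by simp

lemma kink_at_linear: "kink_at (\<lambda>y. s * y) x0 0"
  unfolding kink_at_def by (auto intro!: exI[of _ s] simp: algebra_simps)

lemma kink_at_sum:
  assumes "finite A" and "\<And>a. a \<in> A \<Longrightarrow> kink_at (F a) x0 (k a)"
  shows "kink_at (\<lambda>y. \<Sum>a\<in>A. F a y) x0 (\<Sum>a\<in>A. k a)"
  using assms
proof (induction A rule: finite_induct)
  case empty
  show ?case using kink_at_linear[of 0 x0] by simp
next
  case (insert a A)
  then show ?case using kink_at_add[of "F a" x0 "k a"] by simp
qed

lemma kink_at_hinge:
  fixes \<alpha> \<beta> x0 :: real
  shows "kink_at (\<lambda>y. max 0 (\<alpha> * y + \<beta>)) x0 (if \<alpha> * x0 + \<beta> = 0 then \<bar>\<alpha>\<bar> else 0)"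
proof -
  have lim: "((\<lambda>y. \<alpha> * y + \<beta>) \<longlongrightarrow> \<alpha> * x0 + \<beta>) (nhds x0)"
    by (intro tendsto_intros filterlim_ident)
  consider "\<alpha> * x0 + \<beta> > 0" | "\<alpha> * x0 + \<beta> < 0" | "\<alpha> * x0 + \<beta> = 0" by linarith
  then show ?thesis
  proof cases
    case 1
    then have "\<forall>\<^sub>F y in nhds x0. \<alpha> * y + \<beta> > 0" using order_tendstoD(1)[OF lim] by blast
    then have "\<forall>\<^sub>F y in nhds x0. max 0 (\<alpha> * y + \<beta>) = max 0 (\<alpha> * x0 + \<beta>) + \<alpha> * (y - x0) + 0 * max 0 (x0 - y)"
      by eventually_elim (use 1 in \<open>simp add: algebra_simps\<close>)
    then have "\<exists>s. \<forall>\<^sub>F y in nhds x0. max 0 (\<alpha> * y + \<beta>) = max 0 (\<alpha> * x0 + \<beta>) + s * (y - x0) + 0 * max 0 (x0 - y)"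
      by blast
    then show ?thesis using 1 unfolding kink_at_def by simp
  next
    case 2
    then have "\<forall>\<^sub>F y in nhds x0. \<alpha> * y + \<beta> < 0" using order_tendstoD(2)[OF lim] by blast
    then have "\<forall>\<^sub>F y in nhds x0. max 0 (\<alpha> * y + \<beta>) = max 0 (\<alpha> * x0 + \<beta>) + 0 * (y - x0) + 0 * max 0 (x0 - y)"
      by eventually_elim (use 2 in simp)
    then have "\<exists>s. \<forall>\<^sub>F y in nhds x0. max 0 (\<alpha> * y + \<beta>) = max 0 (\<alpha> * x0 + \<beta>) + s * (y - x0) + 0 * max 0 (x0 - y)"
      by blast
    then show ?thesis using 2 unfolding kink_at_def by simp
  next
    case 3
    have hinge: "max 0 (\<alpha> * t) = max 0 \<alpha> * t + \<bar>\<alpha>\<bar> * max 0 (- t)" for t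
      by (cases "\<alpha> \<ge> 0"; cases "t \<ge> 0") (auto simp: max_def mult_le_0_iff zero_le_mult_iff)
    have "max 0 (\<alpha> * y + \<beta>) = max 0 (\<alpha> * x0 + \<beta>) + max 0 \<alpha> * (y - x0) + \<bar>\<alpha>\<bar> * max 0 (x0 - y)" for y
    proof -
      have "\<alpha> * y + \<beta> = \<alpha> * (y - x0)" using 3 by (simp add: algebra_simps)
      then show ?thesis using hinge[of "y - x0"] 3 by simp
    qed
    then show ?thesis using 3 unfolding kink_at_def by (auto intro!: exI[of _ "max 0 \<alpha>"])
  qed
qed

lemma isCont_if_kink_at:
  assumes "kink_at F x0 k" shows "isCont F x0"
proof -
  obtain s where s: "\<forall>\<^sub>F y in nhds x0. F y = F x0 + s * (y - x0) + k * max 0 (x0 - y)"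
    using assms unfolding kink_at_def by blast
  have "isCont (\<lambda>y. F x0 + s * (y - x0) + k * max 0 (x0 - y)) x0"
    by (intro continuous_intros)
  then show ?thesis using isCont_cong[OF s] by simp
qed

text \<open>\<open>ord_at\<close> compares \<open>F\<close> at \<open>x0\<close> and \<open>(1 + e) x0\<close>, so it measures the jump of the slope
  scaled by \<open>x0\<close>.\<close>
lemma ord_at_kink:
  assumes x0: "x0 > 0" and "kink_at F x0 k"
  shows "ord_at F x0 = x0 * k"
proof -
  obtain s where s: "\<forall>\<^sub>F y in nhds x0. F y = F x0 + s * (y - x0) + k * max 0 (x0 - y)"
    using assms(2) unfolding kink_at_def by blast
  have "((\<lambda>e. (1 + e) * x0) \<longlongrightarrow> (1 + 0) * x0) (at 0)"
    by (intro tendsto_intros)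
  then have "\<forall>\<^sub>F e in at 0. F ((1 + e) * x0) = F x0 + s * ((1 + e) * x0 - x0) + k * max 0 (x0 - (1 + e) * x0)"
    using eventually_compose_filterlim[OF s] by (simp add: filterlim_def)
  then have ev: "\<forall>\<^sub>F e in at 0. F ((1 + e) * x0) - F x0 = s * (e * x0) + k * max 0 (- (e * x0))"
    by (rule eventually_mono) (simp add: algebra_simps)
  then have evL: "\<forall>\<^sub>F e in at_left 0. F ((1 + e) * x0) - F x0 = s * (e * x0) + k * max 0 (- (e * x0))"
    and evR: "\<forall>\<^sub>F e in at_right 0. F ((1 + e) * x0) - F x0 = s * (e * x0) + k * max 0 (- (e * x0))"
    unfolding eventually_at_split by blast+
  have "\<forall>\<^sub>F e in at_right 0. e > (0::real)" "\<forall>\<^sub>F e in at_left 0. e < (0::real)"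
    unfolding eventually_at_filter by simp_all
  have "\<forall>\<^sub>F e in at_right 0. (F ((1 + e) * x0) - F x0) / e = s * x0"
    using evR \<open>\<forall>\<^sub>F e in at_right 0. e > 0\<close>
  proof eventually_elim
    case (elim e)
    then have "max 0 (- (e * x0)) = 0" using x0 by simp
    then show ?case using elim by simp
  qed
  then have R: "Lim (at_right 0) (\<lambda>e. (F ((1 + e) * x0) - F x0) / e) = s * x0"
    by (intro tendsto_Lim tendsto_eventually) simp_all
  have "\<forall>\<^sub>F e in at_left 0. (F ((1 + e) * x0) - F x0) / e = s * x0 - k * x0"
    using evL \<open>\<forall>\<^sub>F e in at_left 0. e < 0\<close>
  proof eventually_elim
    case (elim e)
    then have "max 0 (- (e * x0)) = - (e * x0)" using x0 by (simp add: mult_less_0_iff)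
    then show ?case using elim by (simp add: field_simps)
  qed
  then have L: "Lim (at_left 0) (\<lambda>e. (F ((1 + e) * x0) - F x0) / e) = s * x0 - k * x0"
    by (intro tendsto_Lim tendsto_eventually) simp_all
  show ?thesis unfolding ord_at_def R L by (simp add: algebra_simps)
qed

definition Hp_affine_on :: "nat \<Rightarrow> real set \<Rightarrow> (real \<Rightarrow> real) \<Rightarrow> bool" where
  "Hp_affine_on p S F \<longleftrightarrow> (\<exists>s \<in> Hp p. \<exists>C. \<forall>x \<in> S. F x = s * x + C)"

definition Hp_piecewise_affine_on :: "nat \<Rightarrow> real \<Rightarrow> real \<Rightarrow> (real \<Rightarrow> real) \<Rightarrow> bool" where
  "Hp_piecewise_affine_on p a b F \<longleftrightarrow> (\<exists>K. finite K \<and>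
     (\<forall>lo hi. a \<le> lo \<longrightarrow> lo < hi \<longrightarrow> hi \<le> b \<longrightarrow> {lo<..<hi} \<inter> K = {} \<longrightarrow> Hp_affine_on p {lo..hi} F))"

lemma Hp_affine_on_add:
  assumes p: "p > 0" and "Hp_affine_on p S F" "Hp_affine_on p S G"
  shows "Hp_affine_on p S (\<lambda>x. F x + G x)"
proof -
  obtain s C s' C' where "s \<in> Hp p" "\<forall>x \<in> S. F x = s * x + C" "s' \<in> Hp p" "\<forall>x \<in> S. G x = s' * x + C'"
    using assms(2,3) unfolding Hp_affine_on_def by blast
  then show ?thesis unfolding Hp_affine_on_def
    by (intro bexI[of _ "s + s'"] exI[of _ "C + C'"]) (auto simp: algebra_simps Hp_add[OF p])
qed

lemma Hp_affine_on_diff: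
  assumes p: "p > 0" and "Hp_affine_on p S F" "Hp_affine_on p S G"
  shows "Hp_affine_on p S (\<lambda>x. F x - G x)"
proof -
  obtain s C s' C' where "s \<in> Hp p" "\<forall>x \<in> S. F x = s * x + C" "s' \<in> Hp p" "\<forall>x \<in> S. G x = s' * x + C'"
    using assms(2,3) unfolding Hp_affine_on_def by blast
  then show ?thesis unfolding Hp_affine_on_def
    by (intro bexI[of _ "s - s'"] exI[of _ "C - C'"]) (auto simp: algebra_simps Hp_diff[OF p])
qed

lemma Hp_piecewise_affine_on_combine:
  assumes "Hp_piecewise_affine_on p a b F" "Hp_piecewise_affine_on p a b G"
    and "\<And>S. Hp_affine_on p S F \<Longrightarrow> Hp_affine_on p S G \<Longrightarrow> Hp_affine_on p S H"
  shows "Hp_piecewise_affine_on p a b H"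
proof -
  obtain K K' where "finite K" "finite K'"
    and "\<forall>lo hi. a \<le> lo \<longrightarrow> lo < hi \<longrightarrow> hi \<le> b \<longrightarrow> {lo<..<hi} \<inter> K = {} \<longrightarrow> Hp_affine_on p {lo..hi} F"
    and "\<forall>lo hi. a \<le> lo \<longrightarrow> lo < hi \<longrightarrow> hi \<le> b \<longrightarrow> {lo<..<hi} \<inter> K' = {} \<longrightarrow> Hp_affine_on p {lo..hi} G"
    using assms(1,2) unfolding Hp_piecewise_affine_on_def by blast
  then have "Hp_affine_on p {lo..hi} H"
    if "a \<le> lo" "lo < hi" "hi \<le> b" "{lo<..<hi} \<inter> (K \<union> K') = {}" for lo hi
    using that by (intro assms(3)) (simp_all add: Int_Un_distrib)
  then show ?thesis unfolding Hp_piecewise_affine_on_def using \<open>finite K\<close> \<open>finite K'\<close>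
    by (intro exI[of _ "K \<union> K'"]) auto
qed

lemma Hp_piecewise_affine_on_add:
  assumes "p > 0" "Hp_piecewise_affine_on p a b F" "Hp_piecewise_affine_on p a b G"
  shows "Hp_piecewise_affine_on p a b (\<lambda>x. F x + G x)"
  by (rule Hp_piecewise_affine_on_combine[OF assms(2,3)]) (rule Hp_affine_on_add[OF assms(1)])

lemma Hp_piecewise_affine_on_diff:
  assumes "p > 0" "Hp_piecewise_affine_on p a b F" "Hp_piecewise_affine_on p a b G"
  shows "Hp_piecewise_affine_on p a b (\<lambda>x. F x - G x)"
  by (rule Hp_piecewise_affine_on_combine[OF assms(2,3)]) (rule Hp_affine_on_diff[OF assms(1)])

lemma Hp_piecewise_affine_on_cong:
  assumes FG: "\<And>x. a \<le> x \<Longrightarrow> x \<le> b \<Longrightarrow> F x = G x" and "Hp_piecewise_affine_on p a b G"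
  shows "Hp_piecewise_affine_on p a b F"
proof -
  have "Hp_affine_on p {lo..hi} F" if lohi: "a \<le> lo" "hi \<le> b" and G: "Hp_affine_on p {lo..hi} G" for lo hi
  proof -
    obtain s C where "s \<in> Hp p" "\<forall>x \<in> {lo..hi}. G x = s * x + C"
      using G unfolding Hp_affine_on_def by blast
    moreover have "\<forall>x \<in> {lo..hi}. F x = G x" using FG lohi by simp
    ultimately show ?thesis unfolding Hp_affine_on_def by auto
  qed
  with assms(2) show ?thesis unfolding Hp_piecewise_affine_on_def by (metis (no_types, lifting))
qed

lemma Hp_piecewise_affine_on_linear:
  "s \<in> Hp p \<Longrightarrow> Hp_piecewise_affine_on p a b (\<lambda>x. s * x)"
  unfolding Hp_piecewise_affine_on_def Hp_affine_on_def by (intro exI[of _ "{}"]) force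

lemma Hp_piecewise_affine_on_sum:
  assumes p: "p > 0" and "finite A" and "\<And>i. i \<in> A \<Longrightarrow> Hp_piecewise_affine_on p a b (F i)"
  shows "Hp_piecewise_affine_on p a b (\<lambda>x. \<Sum>i\<in>A. F i x)"
  using assms(2,3)
proof (induction A rule: finite_induct)
  case empty
  show ?case using Hp_piecewise_affine_on_linear[OF Hp_0, of p a b] by simp
next
  case (insert i A)
  then show ?case using Hp_piecewise_affine_on_add[OF p, of a b "F i"] by simp
qed

lemma Hp_piecewise_affine_on_hinge:
  assumes \<alpha>: "\<alpha> \<in> Hp p"
  shows "Hp_piecewise_affine_on p a b (\<lambda>x. max 0 (\<alpha> * x + \<beta>))"
proof -
  have "Hp_affine_on p {lo..hi} (\<lambda>x. max 0 (\<alpha> * x + \<beta>))"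
    if lohi: "lo < hi" and root: "{lo<..<hi} \<inter> {- \<beta> / \<alpha>} = {}" for lo hi
  proof (cases "\<alpha> = 0")
    case True
    then show ?thesis using Hp_0 unfolding Hp_affine_on_def by (intro bexI[of _ 0] exI[of _ "max 0 \<beta>"]) auto
  next
    case False
    define r where "r = - \<beta> / \<alpha>"
    have lin: "\<alpha> * x + \<beta> = \<alpha> * (x - r)" for x using False by (simp add: r_def field_simps)
    have "r \<le> lo \<or> hi \<le> r" using root unfolding r_def by auto
    then have "(\<forall>x \<in> {lo..hi}. x - r \<ge> 0) \<or> (\<forall>x \<in> {lo..hi}. x - r \<le> 0)" by auto
    then have "(\<forall>x \<in> {lo..hi}. \<alpha> * x + \<beta> \<ge> 0) \<or> (\<forall>x \<in> {lo..hi}. \<alpha> * x + \<beta> \<le> 0)"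
      unfolding lin using mult_nonneg_nonneg mult_nonpos_nonpos mult_nonneg_nonpos mult_nonpos_nonneg
      by (metis linear)
    then show ?thesis
    proof
      assume "\<forall>x \<in> {lo..hi}. \<alpha> * x + \<beta> \<ge> 0"
      then show ?thesis using \<alpha> unfolding Hp_affine_on_def by (intro bexI[of _ \<alpha>] exI[of _ \<beta>]) auto
    next
      assume "\<forall>x \<in> {lo..hi}. \<alpha> * x + \<beta> \<le> 0"
      then show ?thesis using Hp_0 unfolding Hp_affine_on_def by (intro bexI[of _ 0] exI[of _ 0]) auto
    qed
  qed
  then show ?thesis unfolding Hp_piecewise_affine_on_def by (intro exI[of _ "{- \<beta> / \<alpha>}"]) auto
qed

lemma sorted_list_breakpoints:
  assumes "finite K" and "a < b"
  obtains xs :: "real list" where "xs \<noteq> []" "sorted xs" "hd xs = a" "last xs = b"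
    and "\<And>k. Suc k < length xs \<Longrightarrow> a \<le> xs ! k \<and> xs ! k < xs ! Suc k \<and> xs ! Suc k \<le> b
                 \<and> {xs ! k<..<xs ! Suc k} \<inter> K = {}"
proof -
  define L where "L = {a, b} \<union> (K \<inter> {a<..<b})"
  have L: "finite L" "a \<in> L" "b \<in> L" "\<And>y. y \<in> L \<Longrightarrow> a \<le> y \<and> y \<le> b"
    unfolding L_def using assms by auto
  define xs where "xs = sorted_list_of_set L"
  have set: "set xs = L" and sorted: "sorted xs" and strict: "sorted_wrt (<) xs" and ne: "xs \<noteq> []"
    unfolding xs_def using L strict_sorted_list_of_set by auto
  have hd: "hd xs = a"
  proof -
    obtain j where "j < length xs" "xs ! j = a" using L(2) set by (metis in_set_conv_nth)
    then have "hd xs \<le> a" using sorted_nth_mono[OF sorted, of 0 j] ne by (simp add: hd_conv_nth)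
    moreover have "a \<le> hd xs" using L(4) ne set hd_in_set by blast
    ultimately show ?thesis by simp
  qed
  have last: "last xs = b"
  proof -
    obtain j where "j < length xs" "xs ! j = b" using L(3) set by (metis in_set_conv_nth)
    then have "b \<le> last xs" using sorted_nth_mono[OF sorted, of j "length xs - 1"] ne by (simp add: last_conv_nth)
    moreover have "last xs \<le> b" using L(4) ne set last_in_set by blast
    ultimately show ?thesis by simp
  qed
  have gaps: "a \<le> xs ! k \<and> xs ! k < xs ! Suc k \<and> xs ! Suc k \<le> b \<and> {xs ! k<..<xs ! Suc k} \<inter> K = {}"
    if k: "Suc k < length xs" for k
  proof (intro conjI)
    show "a \<le> xs ! k" "xs ! Suc k \<le> b" using k L(4) set by (metis Suc_lessD nth_mem)+
    show "xs ! k < xs ! Suc k" using sorted_wrt_nth_less[OF strict, of k "Suc k"] k by simp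
    show "{xs ! k<..<xs ! Suc k} \<inter> K = {}"
    proof (rule ccontr)
      assume "{xs ! k<..<xs ! Suc k} \<inter> K \<noteq> {}"
      then obtain y where y: "xs ! k < y" "y < xs ! Suc k" "y \<in> K" by auto
      have "a \<le> xs ! k" "xs ! Suc k \<le> b" using k L(4) set by (metis Suc_lessD nth_mem)+
      then have "y \<in> set xs" using y set unfolding L_def by auto
      then obtain j where j: "j < length xs" "xs ! j = y" by (metis in_set_conv_nth)
      show False
      proof (cases "j \<le> k")
        case True
        then show False using sorted_nth_mono[OF sorted, of j k] k y j by simp
      next
        case False
        then show False using sorted_nth_mono[OF sorted, of "Suc k" j] y j by simp
      qed
    qed
  qed
  show ?thesis using gaps by (rule that[OF ne sorted hd last])
qed

lemma piecewise_affine_HpI: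
  assumes kink: "\<And>x. x > 0 \<Longrightarrow> \<exists>k. kink_at F x k"
    and pieces: "\<And>a b. 0 < a \<Longrightarrow> a < b \<Longrightarrow> Hp_piecewise_affine_on p a b F"
  shows "piecewise_affine_Hp p F"
proof -
  have "continuous_on {0<..} F"
    using kink isCont_if_kink_at by (intro continuous_at_imp_continuous_on) auto
  moreover have "\<exists>xs::real list. xs \<noteq> [] \<and> sorted xs \<and> hd xs = a \<and> last xs = b \<and>
          (\<forall>k. Suc k < length xs \<longrightarrow> (\<exists>s \<in> Hp p. \<exists>c. \<forall>x \<in> {xs ! k .. xs ! Suc k}. F x = s * x + c))"
    if ab: "0 < a" "a < b" for a b
  proof -
    obtain K where "finite K" and K: "\<And>lo hi. a \<le> lo \<Longrightarrow> lo < hi \<Longrightarrow> hi \<le> b \<Longrightarrow>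
        {lo<..<hi} \<inter> K = {} \<Longrightarrow> Hp_affine_on p {lo..hi} F"
      using pieces[OF ab] unfolding Hp_piecewise_affine_on_def by blast
    obtain xs where xs: "xs \<noteq> []" "sorted xs" "hd xs = a" "last xs = b"
      and gaps: "\<And>k. Suc k < length xs \<Longrightarrow> a \<le> xs ! k \<and> xs ! k < xs ! Suc k \<and> xs ! Suc k \<le> b
                 \<and> {xs ! k<..<xs ! Suc k} \<inter> K = {}"
      using sorted_list_breakpoints[OF \<open>finite K\<close> ab(2)] by blast
    have "\<exists>s \<in> Hp p. \<exists>c. \<forall>x \<in> {xs ! k .. xs ! Suc k}. F x = s * x + c" if "Suc k < length xs" for k
      using K[of "xs ! k" "xs ! Suc k"] gaps[OF that] unfolding Hp_affine_on_def by blast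
    then show ?thesis using xs by blast
  qed
  ultimately show ?thesis unfolding piecewise_affine_Hp_def by blast
qed

lemma sum_lessThan_neg_pos_eq_sum_int:
  "(\<Sum>m<N. g (- int m) + g (int m + 1)) = (\<Sum>k\<in>{- int N<..int N}. g k)"
proof -
  have split: "{- int N<..int N} = (\<lambda>m. - int m) ` {..<N} \<union> (\<lambda>m. int m + 1) ` {..<N}"
  proof
    show "{- int N<..int N} \<subseteq> (\<lambda>m. - int m) ` {..<N} \<union> (\<lambda>m. int m + 1) ` {..<N}"
    proof
      fix k assume k: "k \<in> {- int N<..int N}"
      show "k \<in> (\<lambda>m. - int m) ` {..<N} \<union> (\<lambda>m. int m + 1) ` {..<N}"
      proof (cases "k \<le> 0")
        case True
        then have "k = - int (nat (- k))" "nat (- k) < N" using k by auto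
        then show ?thesis by blast
      next
        case False
        then have "k = int (nat (k - 1)) + 1" "nat (k - 1) < N" using k by auto
        then show ?thesis by blast
      qed
    qed
  qed auto
  have "(\<Sum>k\<in>{- int N<..int N}. g k) = (\<Sum>k\<in>(\<lambda>m. - int m) ` {..<N}. g k) + (\<Sum>k\<in>(\<lambda>m. int m + 1) ` {..<N}. g k)"
    unfolding split by (rule sum.union_disjoint) auto
  also have "\<dots> = (\<Sum>m<N. g (- int m)) + (\<Sum>m<N. g (int m + 1))"
    by (simp add: sum.reindex inj_on_def)
  finally show ?thesis by (simp add: sum.distrib)
qed

lemma sum_indicator_power_int:
  fixes a x :: real
  assumes a: "a > 1" and lo: "a powi (- int N) < x" and hi: "x < a powi int N"
  shows "(\<Sum>k\<in>{- int N<..int N}. if x = a powi k then 1 else 0) = (if \<exists>k. x = a powi k then 1 else (0::real))"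
proof (cases "\<exists>k. x = a powi k")
  case True
  then obtain k0 where k0: "x = a powi k0" by blast
  have mono: "strict_mono (power_int a)"
    by (rule strict_monoI) (rule power_int_strict_increasing[OF _ a])
  then have "- int N < k0" "k0 < int N" using lo hi unfolding k0 strict_mono_less[OF mono] by auto
  moreover have "x = a powi k \<longleftrightarrow> k = k0" for k unfolding k0 using strict_mono_eq[OF mono] by auto
  ultimately show ?thesis using True by simp
qed simp

text \<open>The \<open>m\<close>-th pair of hinges of \<open>\<Theta>\<^sub>h\<^sub>,\<^sub>\<mu>\<close> is kinked at \<open>\<mu> h\<^sup>-\<^sup>1 p\<^sup>-\<^sup>m\<close> and \<open>\<mu> h\<^sup>-\<^sup>1 p\<^sup>m\<^sup>+\<^sup>1\<close>,
  with slope jump \<open>\<mu> / l\<close> at the kink \<open>l\<close>; inside the window exactly one hinge is kinked at \<open>l\<close>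
  if \<open>l \<in> \<mu> h\<^sup>-\<^sup>1 p\<^sup>\<int>\<close>, and none otherwise.\<close>
lemma Theta_hinge_jumps:
  assumes p: "prime p" and h: "h > 0" and mu: "\<mu> > 0" and l: "l > 0"
    and N1: "\<mu> < real p ^ N * h * l" and N2: "h * l < \<mu> * real p ^ N"
  shows "(\<Sum>m<N. (if - (real p ^ m * h) * l + \<mu> = 0 then \<bar>- (real p ^ m * h)\<bar> else 0)
                + (if h / real p ^ Suc m * l + - \<mu> = 0 then \<bar>h / real p ^ Suc m\<bar> else 0))
         = delta_div p h \<mu> (scaledHp p l) / l"
proof -
  have p1: "real p > 1" using prime_gt_1_nat[OF p] by simp
  define x where "x = h * l / \<mu>"
  define g where "g k = (if x = real p powi k then 1 else 0 :: real)" for k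
  have jump1: "(if - (real p ^ m * h) * l + \<mu> = 0 then \<bar>- (real p ^ m * h)\<bar> else 0) = \<mu> / l * g (- int m)" for m
    using h mu l p1 by (auto simp: g_def x_def power_int_minus field_simps)
  have jump2: "(if h / real p ^ Suc m * l + - \<mu> = 0 then \<bar>h / real p ^ Suc m\<bar> else 0) = \<mu> / l * g (int m + 1)" for m
  proof -
    have "real p powi (int m + 1) = real p ^ Suc m"
      using power_int_of_nat[of "real p" "Suc m"] by (simp add: add.commute)
    then show ?thesis using h mu l p1 by (auto simp: g_def x_def field_simps)
  qed
  have count: "(\<Sum>m<N. g (- int m) + g (int m + 1)) = (if \<exists>k. x = real p powi k then 1 else 0)"
  proof -
    have "real p powi (- int N) < x" "x < real p powi int N"
      using N1 N2 l mu p1 by (simp_all add: x_def power_int_minus field_simps)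
    then show ?thesis
      unfolding sum_lessThan_neg_pos_eq_sum_int unfolding g_def by (rule sum_indicator_power_int[OF p1])
  qed
  have "(\<exists>k. x = real p powi k) \<longleftrightarrow> (\<exists>k::int. l = \<mu> / h * real p powi k)"
    unfolding x_def using h mu by (auto simp: field_simps)
  then have orbit: "(\<exists>k. x = real p powi k) \<longleftrightarrow> scaledHp p l = scaledHp p (\<mu> / h)"
    using scaledHp_eq_iff[OF p _ l, of "\<mu> / h"] h mu by simp
  have "(\<Sum>m<N. (if - (real p ^ m * h) * l + \<mu> = 0 then \<bar>- (real p ^ m * h)\<bar> else 0)
      + (if h / real p ^ Suc m * l + - \<mu> = 0 then \<bar>h / real p ^ Suc m\<bar> else 0))
      = \<mu> / l * (\<Sum>m<N. g (- int m) + g (int m + 1))"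
    unfolding jump1 jump2 by (simp add: sum_distrib_left distrib_left)
  also have "\<dots> = delta_div p h \<mu> (scaledHp p l) / l"
    unfolding count orbit delta_div_def by simp
  finally show ?thesis .
qed

lemma kink_at_Theta:
  assumes p: "prime p" and h: "h > 0" and mu: "\<mu> > 0" and l: "l > 0"
  shows "kink_at (Theta p h \<mu>) l (delta_div p h \<mu> (scaledHp p l) / l)"
proof -
  have p1: "real p > 1" using prime_gt_1_nat[OF p] by simp
  obtain N where N: "\<And>y. l / 2 \<le> y \<Longrightarrow> y \<le> 2 * l \<Longrightarrow> \<mu> < real p ^ N * h * y \<and> h * y < \<mu> * real p ^ N"
    using Theta_window[OF p1 h mu, of "l / 2" "2 * l"] l by auto
  define hinges where "hinges y = (\<Sum>m<N. max 0 (- (real p ^ m * h) * y + \<mu>)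
                                        + max 0 (h / real p ^ Suc m * y + - \<mu>))" for y
  have "\<forall>\<^sub>F y in nhds l. y \<in> {l / 2<..<2 * l}" using l by (intro eventually_nhds_in_open) auto
  then have near: "\<forall>\<^sub>F y in nhds l. Theta p h \<mu> y = hinges y"
  proof eventually_elim
    case (elim y)
    then show ?case unfolding hinges_def using N[of y] by (intro Theta_eq_hinge_sum[OF p1 mu]) auto
  qed
  have "kink_at hinges l (\<Sum>m<N. (if - (real p ^ m * h) * l + \<mu> = 0 then \<bar>- (real p ^ m * h)\<bar> else 0)
      + (if h / real p ^ Suc m * l + - \<mu> = 0 then \<bar>h / real p ^ Suc m\<bar> else 0))"
    unfolding hinges_def by (intro kink_at_sum kink_at_add kink_at_hinge) simp
  moreover have "\<mu> < real p ^ N * h * l" "h * l < \<mu> * real p ^ N" using N[of l] l by auto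
  ultimately have "kink_at hinges l (delta_div p h \<mu> (scaledHp p l) / l)"
    using Theta_hinge_jumps[OF p h mu l] by simp
  then show ?thesis by (rule kink_at_cong[OF near])
qed

lemma Hp_piecewise_affine_on_Theta:
  assumes p: "p > 1" and h: "h \<in> Hp_pos p" and mu: "\<mu> > 0" and a: "a > 0"
  shows "Hp_piecewise_affine_on p a b (Theta p h \<mu>)"
proof -
  have p0: "p > 0" and p1: "real p > 1" and hHp: "h \<in> Hp p" and hpos: "h > 0"
    using p h unfolding Hp_pos_def by auto
  obtain N where N: "\<And>x. a \<le> x \<Longrightarrow> x \<le> b \<Longrightarrow> \<mu> < real p ^ N * h * x \<and> h * x < \<mu> * real p ^ N"
    using Theta_window[OF p1 hpos mu a] by blast
  have "Hp_piecewise_affine_on p a b (\<lambda>x. \<Sum>m<N. max 0 (- (real p ^ m * h) * x + \<mu>)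
                                              + max 0 (h / real p ^ Suc m * x + - \<mu>))"
  proof (rule Hp_piecewise_affine_on_sum[OF p0 finite_lessThan])
    fix m
    show "Hp_piecewise_affine_on p a b (\<lambda>x. max 0 (- (real p ^ m * h) * x + \<mu>)
                                          + max 0 (h / real p ^ Suc m * x + - \<mu>))"
      using Hp_uminus[OF Hp_mult[OF p0 Hp_power hHp]] Hp_divide_power[OF hHp]
      by (intro Hp_piecewise_affine_on_add[OF p0] Hp_piecewise_affine_on_hinge)
  qed
  then show ?thesis
  proof (rule Hp_piecewise_affine_on_cong[rotated])
    fix x assume "a \<le> x" "x \<le> b"
    then show "Theta p h \<mu> x = (\<Sum>m<N. max 0 (- (real p ^ m * h) * x + \<mu>)
                                     + max 0 (h / real p ^ Suc m * x + - \<mu>))"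
      using N by (intro Theta_eq_hinge_sum[OF p1 mu]) (auto simp: less_imp_le)
  qed
qed

lemma kink_at_sum_Theta:
  assumes p: "prime p" and pos: "\<forall>i \<in> I. hs i > 0 \<and> mus i > 0" and l: "l > 0"
  shows "kink_at (\<lambda>y. \<Sum>i\<in>I. Theta p (hs i) (mus i) y) l
           ((\<Sum>i\<in>I. delta_div p (hs i) (mus i) (scaledHp p l)) / l)"
proof (cases "finite I")
  case True
  then show ?thesis unfolding sum_divide_distrib using pos
    by (intro kink_at_sum kink_at_Theta[OF p _ _ l]) auto
qed (use kink_at_linear[of 0 l] in simp)

lemma Hp_piecewise_affine_on_sum_Theta:
  assumes "p > 1" and "\<forall>i \<in> I. hs i \<in> Hp_pos p \<and> mus i > 0" and "a > 0"
  shows "Hp_piecewise_affine_on p a b (\<lambda>y. \<Sum>i\<in>I. Theta p (hs i) (mus i) y)"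
proof (cases "finite I")
  case True
  then show ?thesis using assms
    by (intro Hp_piecewise_affine_on_sum Hp_piecewise_affine_on_Theta) auto
qed (use Hp_piecewise_affine_on_linear[OF Hp_0, of p a b] in simp)

lemma sum_Theta_mult_p:
  assumes p: "real p > 1" and pos: "\<forall>i \<in> I. hs i > 0 \<and> mus i > 0" and l: "l > 0"
  shows "(\<Sum>i\<in>I. Theta p (hs i) (mus i) (real p * l))
       = (\<Sum>i\<in>I. Theta p (hs i) (mus i) l) + (\<Sum>i\<in>I. hs i) * l - (\<Sum>i\<in>I. mus i)"
proof -
  have "(\<Sum>i\<in>I. Theta p (hs i) (mus i) (real p * l)) = (\<Sum>i\<in>I. Theta p (hs i) (mus i) l + hs i * l - mus i)"
    using pos l by (intro sum.cong) (auto simp: Theta_mult_p[OF p])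
  then show ?thesis by (simp add: sum.distrib sum_subtractf sum_distrib_right)
qed

lemma deg_eq_sum_superset:
  "finite S \<Longrightarrow> {H. D H \<noteq> 0} \<subseteq> S \<Longrightarrow> deg D = sum D S"
  unfolding deg_def by (rule sum.mono_neutral_left) auto

lemma deg_diff_sum_delta_div:
  assumes "finite I" "finite J"
  shows "deg (\<lambda>H. (\<Sum>i\<in>I. delta_div p (hs i) (mus i) H) - (\<Sum>j\<in>J. delta_div p (hs' j) (mus' j) H))
       = (\<Sum>i\<in>I. mus i) - (\<Sum>j\<in>J. mus' j)"
proof -
  define S where "S = (\<lambda>i. scaledHp p (mus i / hs i)) ` I \<union> (\<lambda>j. scaledHp p (mus' j / hs' j)) ` J"
  have S: "finite S" unfolding S_def using assms by simp
  have total: "(\<Sum>H\<in>S. delta_div p h \<mu> H) = \<mu>" if "scaledHp p (\<mu> / h) \<in> S" for h \<mu>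
    unfolding delta_div_def using S that by (simp add: sum.delta)
  have "(\<Sum>i\<in>I. delta_div p (hs i) (mus i) H) - (\<Sum>j\<in>J. delta_div p (hs' j) (mus' j) H) = 0"
    if "H \<notin> S" for H
  proof -
    have "\<forall>i\<in>I. delta_div p (hs i) (mus i) H = 0" "\<forall>j\<in>J. delta_div p (hs' j) (mus' j) H = 0"
      using that unfolding S_def delta_div_def by auto
    then show ?thesis by simp
  qed
  then have "deg (\<lambda>H. (\<Sum>i\<in>I. delta_div p (hs i) (mus i) H) - (\<Sum>j\<in>J. delta_div p (hs' j) (mus' j) H))
      = (\<Sum>H\<in>S. \<Sum>i\<in>I. delta_div p (hs i) (mus i) H) - (\<Sum>H\<in>S. \<Sum>j\<in>J. delta_div p (hs' j) (mus' j) H)"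
    by (subst deg_eq_sum_superset[OF S]) (auto simp: sum_subtractf)
  also have "\<dots> = (\<Sum>i\<in>I. \<Sum>H\<in>S. delta_div p (hs i) (mus i) H) - (\<Sum>j\<in>J. \<Sum>H\<in>S. delta_div p (hs' j) (mus' j) H)"
    by (simp only: sum.swap[of _ S])
  also have "\<dots> = (\<Sum>i\<in>I. mus i) - (\<Sum>j\<in>J. mus' j)"
    using total unfolding S_def by simp
  finally show ?thesis .
qed

lemma principal_div_eqI:
  assumes "\<And>H. H \<notin> Cp p \<Longrightarrow> D H = 0"
    and kink: "\<And>l. l > 0 \<Longrightarrow> kink_at f l (D (scaledHp p l) / l)"
  shows "principal_div p f = D"
proof
  fix H
  show "principal_div p f H = D H"
  proof (cases "H \<in> Cp p")
    case True
    then have "\<exists>l. l > 0 \<and> H = scaledHp p l" unfolding Cp_def by auto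
    then have "(SOME l. l > 0 \<and> H = scaledHp p l) > 0 \<and> H = scaledHp p (SOME l. l > 0 \<and> H = scaledHp p l)"
      by (rule someI_ex)
    then show ?thesis using True ord_at_kink[OF _ kink] unfolding principal_div_def by auto
  next
    case False
    then show ?thesis using assms(1) unfolding principal_div_def by simp
  qed
qed

theorem proposition5p11:
  fixes p :: nat and I :: "'i set" and J :: "'j set"
    and hs :: "'i \<Rightarrow> real" and mus :: "'i \<Rightarrow> real"
    and hs' :: "'j \<Rightarrow> real" and mus' :: "'j \<Rightarrow> real"
    and h :: real and D Dplus Dminus :: "real set \<Rightarrow> real"
  assumes "prime p"
    and "finite I" and "finite J"
    and "\<forall>i \<in> I. hs i \<in> Hp_pos p \<and> mus i > 0"
    and "\<forall>j \<in> J. hs' j \<in> Hp_pos p \<and> mus' j > 0"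
    and "Dplus = (\<lambda>H. \<Sum>i \<in> I. delta_div p (hs i) (mus i) H)"
    and "Dminus = (\<lambda>H. \<Sum>j \<in> J. delta_div p (hs' j) (mus' j) H)"
    and "D = (\<lambda>H. Dplus H - Dminus H)"
    and "is_divisor p D" and "effective Dplus" and "effective Dminus"
    and "deg D = 0"
    and "h \<in> Hp p"
    and "(real p - 1) * h = (\<Sum>i \<in> I. hs i) - (\<Sum>j \<in> J. hs' j)"
  shows "let f = (\<lambda>l. (\<Sum>i \<in> I. Theta p (hs i) (mus i) l)
                     - (\<Sum>j \<in> J. Theta p (hs' j) (mus' j) l) - h * l)
         in piecewise_affine_Hp p f
            \<and> (\<forall>l > 0. f (real p * l) = f l)
            \<and> principal_div p f = D"
proof -
  have p1: "p > 1" using prime_gt_1_nat[OF assms(1)] .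
  have pos: "\<forall>i \<in> I. hs i > 0 \<and> mus i > 0" "\<forall>j \<in> J. hs' j > 0 \<and> mus' j > 0"
    using assms(4,5) unfolding Hp_pos_def by auto
  define f where "f l = (\<Sum>i \<in> I. Theta p (hs i) (mus i) l) - (\<Sum>j \<in> J. Theta p (hs' j) (mus' j) l) - h * l" for l
  have D: "D = (\<lambda>H. (\<Sum>i \<in> I. delta_div p (hs i) (mus i) H) - (\<Sum>j \<in> J. delta_div p (hs' j) (mus' j) H))"
    using assms(6-8) by simp
  have masses: "(\<Sum>i \<in> I. mus i) - (\<Sum>j \<in> J. mus' j) = 0"
    using assms(12) deg_diff_sum_delta_div[OF assms(2,3)] unfolding D by simp
  have kink: "kink_at f l (D (scaledHp p l) / l)" if "l > 0" for l
    using kink_at_diff[OF kink_at_diff[OF kink_at_sum_Theta kink_at_sum_Theta] kink_at_linear]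
      assms(1) pos that unfolding f_def D by (simp add: diff_divide_distrib)
  have "piecewise_affine_Hp p f"
  proof (rule piecewise_affine_HpI)
    show "Hp_piecewise_affine_on p a b f" if "0 < a" for a b
      unfolding f_def using p1 assms(4,5,13) that
      by (intro Hp_piecewise_affine_on_diff Hp_piecewise_affine_on_sum_Theta Hp_piecewise_affine_on_linear) auto
  qed (use kink in blast)
  moreover have "f (real p * l) = f l" if "l > 0" for l
  proof -
    have "f (real p * l) = f l + l * ((\<Sum>i \<in> I. hs i) - (\<Sum>j \<in> J. hs' j) - (real p - 1) * h)
                           - ((\<Sum>i \<in> I. mus i) - (\<Sum>j \<in> J. mus' j))"
      using sum_Theta_mult_p[OF _ pos(1) that, of p] sum_Theta_mult_p[OF _ pos(2) that, of p] p1
      unfolding f_def by (simp add: algebra_simps)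
    then show ?thesis using assms(14) masses by simp
  qed
  moreover have "principal_div p f = D"
    using assms(9) kink unfolding is_divisor_def by (intro principal_div_eqI) auto
  ultimately show ?thesis unfolding Let_def f_def[abs_def, symmetric] by blast
qed

end
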